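(* For $n\in\{0,1,2,\dots\}$ define \[ \omega_n=\begin{cases}\dfrac{2n+3}{n+1}\,\dfrac{\Gamma\left(\frac n2+1\right)}{\Gamma\left(\frac{n+1}{2}\right)}, & n\text{ odd},\\[3ex] (n+1)\dfrac{\Gamma\left(\frac{n+1}{2}\right)}{\Gamma\left(\frac n2+1\right)}, & n\text{ even}.\end{cases} \] Then the sequence $(\omega_n)_{n\ge0}$ is positive and strictly increasing, and the sequence $(\tau_n)_{n\ge0}$ given by $\tau_n=\omega_{n+1}-\omega_n$ is positive and non-increasing.
   Context: $\Gamma$ denotes the Gamma function. *)

theory Defs
  imports "HOL-Analysis.Analysis"
begin

definition omega :: "nat \<Rightarrow> real" where
  "omega n = (if odd n
     then (2 * real n + 3) / (real n + 1) * (Gamma (real n / 2 + 1) / Gamma ((real n + 1) / 2))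
     else (real n + 1) * (Gamma ((real n + 1) / 2) / Gamma (real n / 2 + 1)))"

definition tau :: "nat \<Rightarrow> real" where
  "tau n = omega (Suc n) - omega n"

end

theory Submission
  imports Defs
begin

text \<open>With \<open>c\<^sub>k = \<Gamma>(k + 1/2) / \<Gamma>(k + 1)\<close> one has \<open>\<omega>\<^sub>2\<^sub>k = (2k+1) c\<^sub>k\<close> and
  \<open>\<omega>\<^sub>2\<^sub>k\<^sub>+\<^sub>1 = (4k+5)(2k+1) c\<^sub>k / (4(k+1))\<close>. Using \<open>c\<^sub>k\<^sub>+\<^sub>1 = c\<^sub>k (2k+1)/(2k+2)\<close>, both
  differences \<open>\<tau>\<^sub>2\<^sub>k\<close> and \<open>\<tau>\<^sub>2\<^sub>k\<^sub>+\<^sub>1\<close> equal \<open>c\<^sub>k\<^sub>+\<^sub>1 / 2\<close>. Hence \<open>\<tau>\<close> is positive, and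
  non-increasing because \<open>c\<close> is decreasing.\<close>

lemma Gamma_plus1_real_pos: "(x::real) > 0 \<Longrightarrow> Gamma (x + 1) = x * Gamma x"
  by (rule Gamma_plus1) (auto dest: nonpos_Ints_nonpos)

definition gamma_half_ratio :: "nat \<Rightarrow> real" where
  "gamma_half_ratio k = Gamma (real k + 1/2) / Gamma (real k + 1)"

lemma gamma_half_ratio_pos: "gamma_half_ratio k > 0"
  unfolding gamma_half_ratio_def by (intro divide_pos_pos Gamma_real_pos) auto

lemma gamma_half_ratio_Suc:
  "gamma_half_ratio (Suc k) = gamma_half_ratio k * (2 * real k + 1) / (2 * real k + 2)"
proof -
  have num: "Gamma (real (Suc k) + 1/2) = (real k + 1/2) * Gamma (real k + 1/2)"
    using Gamma_plus1_real_pos[of "real k + 1/2"] by (simp add: algebra_simps)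
  have den: "Gamma (real (Suc k) + 1) = (real k + 1) * Gamma (real k + 1)"
    using Gamma_plus1_real_pos[of "real k + 1"] by (simp add: algebra_simps)
  have "Gamma (real k + 1) > 0" by (intro Gamma_real_pos) auto
  then show ?thesis
    unfolding gamma_half_ratio_def num den by (simp add: field_simps)
qed

lemma gamma_half_ratio_decseq: "decseq gamma_half_ratio"
proof (rule decseq_SucI)
  fix k
  show "gamma_half_ratio (Suc k) \<le> gamma_half_ratio k"
    using gamma_half_ratio_pos[of k] unfolding gamma_half_ratio_Suc by (simp add: field_simps)
qed

lemma omega_even: "omega (2 * k) = (2 * real k + 1) * gamma_half_ratio k"
proof -
  have arg_num: "(real (2 * k) + 1) / 2 = real k + 1/2"
    by (simp add: field_simps)
  have arg_den: "real (2 * k) / 2 + 1 = real k + 1"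
    by simp
  show ?thesis
    unfolding omega_def gamma_half_ratio_def arg_num arg_den by simp
qed

lemma omega_odd:
  "omega (2 * k + 1) = (4 * real k + 5) * (2 * real k + 1) / (4 * (real k + 1)) * gamma_half_ratio k"
proof -
  have arg_num: "real (2 * k + 1) / 2 + 1 = (real k + 1/2) + 1"
    by (simp add: field_simps)
  have arg_den: "(real (2 * k + 1) + 1) / 2 = real k + 1"
    by simp
  have num: "Gamma ((real k + 1/2) + 1) = (real k + 1/2) * Gamma (real k + 1/2)"
    using Gamma_plus1_real_pos[of "real k + 1/2"] by simp
  have "Gamma (real k + 1) > 0" by (intro Gamma_real_pos) auto
  then show ?thesis
    unfolding omega_def gamma_half_ratio_def arg_num arg_den num by (simp add: field_simps)
qed

lemma tau_eq_gamma_half_ratio: "tau n = gamma_half_ratio (Suc (n div 2)) / 2"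
proof (cases "even n")
  case True
  then obtain k where n: "n = 2 * k" by auto
  show ?thesis
    unfolding n tau_def using omega_odd[of k] omega_even[of k]
    by (simp add: gamma_half_ratio_Suc field_simps)
next
  case False
  then obtain k where n: "n = 2 * k + 1" using oddE by blast
  have "Suc n = 2 * Suc k" "n div 2 = k" using n by simp_all
  then show ?thesis
    unfolding tau_def using omega_even[of "Suc k"] omega_odd[of k] n
    by (simp add: gamma_half_ratio_Suc field_simps)
qed

lemma tau_pos: "tau n > 0"
  using gamma_half_ratio_pos by (simp add: tau_eq_gamma_half_ratio)

lemma tau_Suc_le: "tau (Suc n) \<le> tau n"
proof -
  have "Suc (n div 2) \<le> Suc (Suc n div 2)" by simp
  then show ?thesis
    using gamma_half_ratio_decseq unfolding tau_eq_gamma_half_ratio decseq_def by simp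
qed

lemma omega_pos: "omega n > 0"
proof (cases "even n")
  case True
  then obtain k where "n = 2 * k" by auto
  then show ?thesis
    using omega_even[of k] gamma_half_ratio_pos[of k] by (simp add: zero_less_mult_iff)
next
  case False
  then obtain k where "n = 2 * k + 1" using oddE by blast
  then show ?thesis
    using omega_odd[of k] gamma_half_ratio_pos[of k] by (simp add: zero_less_mult_iff)
qed

theorem lemma6p4:
  shows "(\<forall>n. omega n > 0) \<and> (\<forall>n. omega n < omega (Suc n))
       \<and> (\<forall>n. tau n > 0) \<and> (\<forall>n. tau (Suc n) \<le> tau n)"
  using omega_pos tau_pos tau_Suc_le unfolding tau_def by auto

end
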